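(* Let $G_M$ be a maximal reducible graph, let $T_M$ be a persistent phylogeny solving $G_M$, and let $c,c'$ be overlapping characters occurring in $T_M$ and inactive in $G_M$. Then one of the following holds: (1) $T_M$ contains (in this order along a root-to-leaf path) the edges $c^+$, $c'^+$, $c^-$, $c'^-$, where $c'^-$ may be missing; (2) $T_M$ contains (in this order along a root-to-leaf path) the edges $c'^+$, $c^+$, $c'^-$, $c^-$, where $c^-$ may be missing; (3) $c^-$ and $c'^-$ appear in two distinct paths of $T_M$, and, if $c$ and $c'$ are conflicting in $G_M$, $T_M$ has a species preceding both $c^+$ and $c'^+$.
   Context: Persistent phylogeny. Let $M$ be a binary matrix with rows indexed by species $S$ and columns by characters $C=\{c_1,\dots,c_m\}$, and $A\subseteq C$ (active characters). A persistent phylogeny for $(M,A)$ is a rooted tree $T$ whose nodes $x$ carry vectors $l_x\in\{0,1\}^m$ (the state of $x$) such that: the root $r$ has $l_r[j]=1$ iff $c_j\in A$; each edge is labelled $c_j^+$ for each character changing from 0 to 1 on it and $c_j^-$ for each changing from 1 to 0; each character changes state on at most two edges, and if on two, they lie on one root-to-leaf path with the gain $c_j^+$ closer to the root than the loss $c_j^-$; each row of $M$ equals $l_x$ for some node $x$ (called a species of $T$). Edges are identified with their labels. Red-black graphs. A red-black graph on species $S$ and characters $C$ is a bipartite graph on $S\cup C$ with red or black edges, each character incident only to black edges (inactive) or only to red edges (active). Its associated matrix has $M[s,c]=1$ iff $(s,c)$ is black, or $c$ is active and $(s,c)$ is not an edge; a tree solving the graph is a persistent phylogeny for (associated matrix,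 set of active characters). $S(c)=\{s:M[s,c]=1\}$. Two characters $c,c'$ overlap if $S(c)\cap S(c')\neq\emptyset$ and neither of $S(c),S(c')$ contains the other; they are conflicting if the pairs $(M[s,c],M[s,c'])$, $s\in S$, take all four values $(0,0),(0,1),(1,0),(1,1)$. Realizing $c^+$ ($c$ inactive): with $D(c)$ the species of the component of $c$, add red edges from $c$ to $D(c)\setminus N(c)$, delete black edges on $c$ and isolated vertices; realizing $c^-$ ($c$ active, $D(c)\subseteq N(c)$): delete all edges on $c$ and isolated vertices. An active character red-adjacent to all species is free. A c-reduction $\langle c_1^+,\dots,c_k^+\rangle$ is successful if realizing the characters in order is always defined (realizing negatively each character right after it becomes free) and yields the empty graph. A red-black graph is reducible if it is connected and admits a successful reduction (i.e. is solved by some persistent phylogeny). Standing assumption: no free, null (isolated) or universal (inactive and black-adjacent to all species) characters, no species with no characters, no two identical character columns. An inactive character $c$ is maximal if no inactive $c'$ has $S(c)\subsetneq S(c')$. A maximal reducible graph is a reducible red-black graph all of whose characters are inactive and maximal. *)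

theory Defs
  imports Main
begin

text \<open>The edge entering a non-root node x is the edge (par x, x); edges are identified
  with their lower endpoint x.\<close>

definition rooted_tree :: "'v set \<Rightarrow> 'v \<Rightarrow> ('v \<Rightarrow> 'v) \<Rightarrow> bool" where
  "rooted_tree V r par \<longleftrightarrow> finite V \<and> r \<in> V \<and> par r = r \<and> (\<forall>x\<in>V. par x \<in> V)
     \<and> (\<forall>x\<in>V. \<exists>n. (par ^^ n) x = r)"

definition anc :: "('v \<Rightarrow> 'v) \<Rightarrow> 'v \<Rightarrow> 'v \<Rightarrow> bool" where
  "anc par x y \<longleftrightarrow> (\<exists>n. (par ^^ n) y = x)"

definition proper_anc :: "('v \<Rightarrow> 'v) \<Rightarrow> 'v \<Rightarrow> 'v \<Rightarrow> bool" where
  "proper_anc par x y \<longleftrightarrow> anc par x y \<and> x \<noteq> y"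

text \<open>The edge entering x is labelled c^+ (gain) resp. c^- (loss).\<close>
definition gain_edge :: "'v set \<Rightarrow> 'v \<Rightarrow> ('v \<Rightarrow> 'v) \<Rightarrow> ('v \<Rightarrow> 'c \<Rightarrow> bool) \<Rightarrow> 'c \<Rightarrow> 'v \<Rightarrow> bool" where
  "gain_edge V r par l c x \<longleftrightarrow> x \<in> V \<and> x \<noteq> r \<and> \<not> l (par x) c \<and> l x c"

definition loss_edge :: "'v set \<Rightarrow> 'v \<Rightarrow> ('v \<Rightarrow> 'v) \<Rightarrow> ('v \<Rightarrow> 'c \<Rightarrow> bool) \<Rightarrow> 'c \<Rightarrow> 'v \<Rightarrow> bool" where
  "loss_edge V r par l c x \<longleftrightarrow> x \<in> V \<and> x \<noteq> r \<and> l (par x) c \<and> \<not> l x c"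

definition change_edges :: "'v set \<Rightarrow> 'v \<Rightarrow> ('v \<Rightarrow> 'v) \<Rightarrow> ('v \<Rightarrow> 'c \<Rightarrow> bool) \<Rightarrow> 'c \<Rightarrow> 'v set" where
  "change_edges V r par l c = {x \<in> V. x \<noteq> r \<and> l (par x) c \<noteq> l x c}"

definition species_node :: "'s set \<Rightarrow> 'c set \<Rightarrow> ('s \<Rightarrow> 'c \<Rightarrow> bool) \<Rightarrow> 'v set \<Rightarrow> ('v \<Rightarrow> 'c \<Rightarrow> bool) \<Rightarrow> 'v \<Rightarrow> bool" where
  "species_node S C M V l x \<longleftrightarrow> x \<in> V \<and> (\<exists>s\<in>S. \<forall>c\<in>C. l x c = M s c)"

definition persistent_phylogeny ::
  "'s set \<Rightarrow> 'c set \<Rightarrow> ('s \<Rightarrow> 'c \<Rightarrow> bool) \<Rightarrow> 'c set \<Rightarrow>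
   'v set \<Rightarrow> 'v \<Rightarrow> ('v \<Rightarrow> 'v) \<Rightarrow> ('v \<Rightarrow> 'c \<Rightarrow> bool) \<Rightarrow> bool" where
  "persistent_phylogeny S C M A V r par l \<longleftrightarrow>
     rooted_tree V r par
   \<and> (\<forall>c\<in>C. l r c \<longleftrightarrow> c \<in> A)
   \<and> (\<forall>c\<in>C. card (change_edges V r par l c) \<le> 2
         \<and> (card (change_edges V r par l c) = 2 \<longrightarrow>
              (\<exists>x y. change_edges V r par l c = {x, y} \<and> proper_anc par x y
                     \<and> gain_edge V r par l c x \<and> loss_edge V r par l c y)))
   \<and> (\<forall>s\<in>S. \<exists>x\<in>V. \<forall>c\<in>C. l x c = M s c)"

text \<open>A red-black graph on species S and characters C is given by its edge set E
  and its set Act of active characters: edges on active characters are red,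
  edges on inactive characters are black.\<close>

definition rb_graph :: "'s set \<Rightarrow> 'c set \<Rightarrow> ('s \<times> 'c) set \<Rightarrow> 'c set \<Rightarrow> bool" where
  "rb_graph S C E Act \<longleftrightarrow> finite S \<and> finite C \<and> E \<subseteq> S \<times> C \<and> Act \<subseteq> C"

definition rb_matrix :: "('s \<times> 'c) set \<Rightarrow> 'c set \<Rightarrow> 's \<Rightarrow> 'c \<Rightarrow> bool" where
  "rb_matrix E Act s c \<longleftrightarrow> ((s, c) \<in> E \<and> c \<notin> Act) \<or> (c \<in> Act \<and> (s, c) \<notin> E)"

definition rb_solves ::
  "'s set \<Rightarrow> 'c set \<Rightarrow> ('s \<times> 'c) set \<Rightarrow> 'c set \<Rightarrow>
   'v set \<Rightarrow> 'v \<Rightarrow> ('v \<Rightarrow> 'v) \<Rightarrow> ('v \<Rightarrow> 'c \<Rightarrow> bool) \<Rightarrow> bool" where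
  "rb_solves S C E Act V r par l \<longleftrightarrow> persistent_phylogeny S C (rb_matrix E Act) Act V r par l"

definition rb_connected :: "'s set \<Rightarrow> 'c set \<Rightarrow> ('s \<times> 'c) set \<Rightarrow> bool" where
  "rb_connected S C E \<longleftrightarrow>
     (let R = {(Inl s, Inr c) | s c. (s, c) \<in> E} in
      \<forall>u \<in> Inl ` S \<union> Inr ` C. \<forall>v \<in> Inl ` S \<union> Inr ` C. (u, v) \<in> (R \<union> R\<inverse>)\<^sup>*)"

text \<open>Standing assumption: no free, null or universal characters, no species without
  characters, no two identical character columns.\<close>
definition rb_standing :: "'s set \<Rightarrow> 'c set \<Rightarrow> ('s \<times> 'c) set \<Rightarrow> 'c set \<Rightarrow> bool" where
  "rb_standing S C E Act \<longleftrightarrow>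
     (\<forall>c\<in>Act. \<not> (\<forall>s\<in>S. (s, c) \<in> E))
   \<and> (\<forall>c\<in>C. \<exists>s\<in>S. (s, c) \<in> E)
   \<and> (\<forall>c\<in>C - Act. \<not> (\<forall>s\<in>S. (s, c) \<in> E))
   \<and> (\<forall>s\<in>S. \<exists>c\<in>C. (s, c) \<in> E)
   \<and> (\<forall>c\<in>C. \<forall>c'\<in>C. c \<noteq> c' \<longrightarrow> (\<exists>s\<in>S. rb_matrix E Act s c \<noteq> rb_matrix E Act s c'))"

text \<open>Reducible: connected and solved by some persistent phylogeny (node type nat
  is used for the witness tree; any finite tree can be relabelled so).\<close>
definition reducible :: "'s set \<Rightarrow> 'c set \<Rightarrow> ('s \<times> 'c) set \<Rightarrow> 'c set \<Rightarrow> bool" where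
  "reducible S C E Act \<longleftrightarrow> rb_graph S C E Act \<and> rb_connected S C E
     \<and> (\<exists>(V::nat set) r par l. rb_solves S C E Act V r par l)"

definition charS :: "'s set \<Rightarrow> ('s \<Rightarrow> 'c \<Rightarrow> bool) \<Rightarrow> 'c \<Rightarrow> 's set" where
  "charS S M c = {s \<in> S. M s c}"

definition overlap :: "'s set \<Rightarrow> ('s \<Rightarrow> 'c \<Rightarrow> bool) \<Rightarrow> 'c \<Rightarrow> 'c \<Rightarrow> bool" where
  "overlap S M c c' \<longleftrightarrow> charS S M c \<inter> charS S M c' \<noteq> {}
     \<and> \<not> charS S M c \<subseteq> charS S M c' \<and> \<not> charS S M c' \<subseteq> charS S M c"

definition conflicting :: "'s set \<Rightarrow> ('s \<Rightarrow> 'c \<Rightarrow> bool) \<Rightarrow> 'c \<Rightarrow> 'c \<Rightarrow> bool" where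
  "conflicting S M c c' \<longleftrightarrow>
     (\<forall>a b. \<exists>s\<in>S. M s c = a \<and> M s c' = b)"

definition maximal_char :: "'s set \<Rightarrow> 'c set \<Rightarrow> ('s \<times> 'c) set \<Rightarrow> 'c set \<Rightarrow> 'c \<Rightarrow> bool" where
  "maximal_char S C E Act c \<longleftrightarrow> c \<in> C - Act \<and>
     \<not> (\<exists>c'\<in>C - Act. charS S (rb_matrix E Act) c \<subset> charS S (rb_matrix E Act) c')"

definition maximal_reducible :: "'s set \<Rightarrow> 'c set \<Rightarrow> ('s \<times> 'c) set \<Rightarrow> 'c set \<Rightarrow> bool" where
  "maximal_reducible S C E Act \<longleftrightarrow> rb_graph S C E Act \<and> rb_standing S C E Act
     \<and> reducible S C E Act \<and> Act = {} \<and> (\<forall>c\<in>C. maximal_char S C E Act c)"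

end

theory Submission
  imports Defs
begin

(* The gains g of c and g' of c' lie above a common species, so they are comparable; say g is
   an ancestor of g'. A species with c' but not c lies below g', hence c is lost at some h
   strictly below g'. If c' is lost below h (or never) and g <> g', this is case (1). Otherwise
   the losses of c and c' lie on distinct paths, and the species having c or c' are exactly the
   species in the subtree of g. If c and c' conflict, some species lies outside that subtree;
   connectivity gives a character d shared across its border, and maximality of all characters
   forces the node where the path to an outside species carrying d leaves the ancestors of g
   to be a species node itself, strictly above g. *)

locale rooted =
  fixes V :: "'v set" and r :: 'v and par :: "'v \<Rightarrow> 'v"
  assumes tree: "rooted_tree V r par"
begin

lemma finite_nodes: "finite V"
  and par_root: "par r = r"
  and par_in_V: "x \<in> V \<Longrightarrow> par x \<in> V"
  and reaches_root: "x \<in> V \<Longrightarrow> \<exists>n. (par ^^ n) x = r"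
  using tree unfolding rooted_tree_def by auto

lemma funpow_par_root: "(par ^^ n) r = r"
  by (induction n) (auto simp: par_root)

lemma funpow_par_in_V: "x \<in> V \<Longrightarrow> (par ^^ n) x \<in> V"
  by (induction n) (auto simp: par_in_V)

lemma anc_refl [simp]: "anc par x x"
  unfolding anc_def by (metis funpow_0)

lemma anc_trans: "anc par x y \<Longrightarrow> anc par y z \<Longrightarrow> anc par x z"
  unfolding anc_def by (metis funpow_add comp_apply)

lemma anc_par: "anc par (par y) y"
  unfolding anc_def by (metis funpow_0 funpow_Suc_right comp_apply)

lemma anc_in_V: "y \<in> V \<Longrightarrow> anc par x y \<Longrightarrow> x \<in> V"
  unfolding anc_def using funpow_par_in_V by blast

lemma root_anc: "y \<in> V \<Longrightarrow> anc par r y"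
  unfolding anc_def using reaches_root by blast

lemma anc_funpow_diff:
  assumes "(par ^^ n) y = x" "(par ^^ m) y = z" "n \<le> m"
  shows "anc par z x"
proof -
  have "(par ^^ (m - n)) x = z"
    using assms by (metis funpow_add le_add_diff_inverse2 comp_apply)
  then show ?thesis unfolding anc_def by blast
qed

lemma anc_linear: "anc par x y \<Longrightarrow> anc par z y \<Longrightarrow> anc par x z \<or> anc par z x"
proof -
  assume "anc par x y" "anc par z y"
  then obtain n m where "(par ^^ n) y = x" "(par ^^ m) y = z" unfolding anc_def by blast
  then show ?thesis using anc_funpow_diff nat_le_linear by metis
qed

lemma anc_antisym:
  assumes "y \<in> V" "anc par x y" "anc par y x"
  shows "x = y"
proof -
  obtain n m where n: "(par ^^ n) y = x" and m: "(par ^^ m) x = y"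
    using assms unfolding anc_def by blast
  have cycle: "(par ^^ (k * (m + n))) y = y" for k
    using n m by (induction k) (auto simp: funpow_add)
  show ?thesis
  proof (cases "m + n = 0")
    case True
    then show ?thesis using n by simp
  next
    case False
    \<comment> \<open>a node on a cycle of par is fixed by arbitrarily long iterates, hence equals the root\<close>
    obtain N where N: "(par ^^ N) y = r" using reaches_root assms(1) by blast
    have "anc par y r"
      using anc_funpow_diff[OF N cycle[of N]] False by simp
    then have "y = r"
      unfolding anc_def using funpow_par_root by simp
    then show ?thesis using n funpow_par_root by simp
  qed
qed

lemma proper_anc_not_anc: "y \<in> V \<Longrightarrow> proper_anc par x y \<Longrightarrow> \<not> anc par y x"
  unfolding proper_anc_def using anc_antisym by blast

lemma anc_lowest_common:
  assumes "e \<in> V" "g \<in> V"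
  obtains a where "anc par a e" "anc par a g" "\<And>x. anc par x e \<Longrightarrow> anc par x g \<Longrightarrow> anc par x a"
proof -
  define P where "P n \<longleftrightarrow> anc par ((par ^^ n) e) g" for n
  obtain N where "(par ^^ N) e = r" using reaches_root assms(1) by blast
  then have "P N" unfolding P_def using root_anc assms(2) by simp
  define a where "a = (par ^^ (LEAST n. P n)) e"
  have "anc par a g"
    using LeastI[of P, OF \<open>P N\<close>] unfolding a_def P_def .
  moreover have "anc par a e" unfolding a_def anc_def by blast
  moreover have "anc par x a" if xe: "anc par x e" and xg: "anc par x g" for x
  proof -
    obtain m where m: "(par ^^ m) e = x" using xe unfolding anc_def by blast
    then have "P m" using xg unfolding P_def by simp
    then show ?thesis
      using anc_funpow_diff[OF a_def[symmetric] m Least_le] by blast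
  qed
  ultimately show ?thesis using that by blast
qed

lemma change_on_path:
  assumes "y \<in> V" "anc par z y" "l z ch \<noteq> l y ch"
  shows "\<exists>w \<in> change_edges V r par l ch. proper_anc par z w \<and> anc par w y"
proof -
  obtain n where "(par ^^ n) y = z" using assms(2) unfolding anc_def by blast
  with assms(1,3) show ?thesis
  proof (induction n arbitrary: y)
    case 0
    then show ?case by simp
  next
    case (Suc n)
    show ?case
    proof (cases "l (par y) ch = l y ch")
      case True
      have "(par ^^ n) (par y) = z"
        using Suc.prems(3) by (simp add: funpow_Suc_right del: funpow.simps)
      then obtain w where "w \<in> change_edges V r par l ch" "proper_anc par z w" "anc par w (par y)"
        using Suc.IH[OF par_in_V[OF Suc.prems(1)]] Suc.prems(2) True by auto
      then show ?thesis using anc_trans[OF _ anc_par] by blast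
    next
      case False
      then have "y \<in> change_edges V r par l ch"
        using Suc.prems(1) par_root unfolding change_edges_def by auto
      moreover have "proper_anc par z y"
        using Suc.prems unfolding proper_anc_def anc_def by blast
      ultimately show ?thesis by auto
    qed
  qed
qed

end

(* All characters are inactive at the root, as they are in a maximal reducible graph. *)
locale phylogeny = rooted V r par for V :: "'v set" and r and par +
  fixes l :: "'v \<Rightarrow> 'c \<Rightarrow> bool" and C :: "'c set"
  assumes root_state: "\<forall>c\<in>C. \<not> l r c"
    and change_edges_shape: "\<forall>c\<in>C. card (change_edges V r par l c) \<le> 2
         \<and> (card (change_edges V r par l c) = 2 \<longrightarrow>
              (\<exists>x y. change_edges V r par l c = {x, y} \<and> proper_anc par x y
                     \<and> gain_edge V r par l c x \<and> loss_edge V r par l c y))"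
begin

abbreviation "gain \<equiv> gain_edge V r par l"
abbreviation "loss \<equiv> loss_edge V r par l"

lemma change_edges_eq: "change_edges V r par l ch = {x. gain ch x \<or> loss ch x}"
  unfolding change_edges_def gain_edge_def loss_edge_def by auto

lemma gain_in_V: "gain ch x \<Longrightarrow> x \<in> V"
  unfolding gain_edge_def by simp

lemma loss_in_V: "loss ch x \<Longrightarrow> x \<in> V"
  unfolding loss_edge_def by simp

lemma not_gain_and_loss: "gain ch x \<Longrightarrow> \<not> loss ch x"
  unfolding gain_edge_def loss_edge_def by simp

lemma state_eq_if_no_change_between:
  assumes "y \<in> V" "anc par z y"
    and "\<And>w. gain ch w \<or> loss ch w \<Longrightarrow> proper_anc par z w \<Longrightarrow> anc par w y \<Longrightarrow> False"
  shows "l z ch = l y ch"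
proof (rule ccontr)
  assume "l z ch \<noteq> l y ch"
  then obtain w where "gain ch w \<or> loss ch w" "proper_anc par z w" "anc par w y"
    using change_on_path[OF assms(1,2), of l ch] unfolding change_edges_eq by blast
  then show False by (rule assms(3))
qed

lemma character_cases:
  assumes "ch \<in> C"
  obtains (unchanged) "\<forall>x. \<not> gain ch x" "\<forall>x. \<not> loss ch x"
    | (gained) g where "\<forall>x. gain ch x \<longleftrightarrow> x = g" "\<forall>x. \<not> loss ch x"
    | (gained_lost) g h where "\<forall>x. gain ch x \<longleftrightarrow> x = g" "\<forall>x. loss ch x \<longleftrightarrow> x = h"
        "proper_anc par g h"
proof -
  let ?Ch = "change_edges V r par l ch"
  have "finite ?Ch" using finite_nodes unfolding change_edges_def by simp
  moreover have "card ?Ch \<le> 2" using change_edges_shape assms by blast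
  ultimately consider "?Ch = {}" | g where "?Ch = {g}" | "card ?Ch = 2"
    by (metis card_0_eq card_1_singletonE le_Suc_eq numeral_2_eq_2 One_nat_def le_0_eq)
  then show ?thesis
  proof cases
    case 1
    then show ?thesis using unchanged unfolding change_edges_eq by blast
  next
    case (2 g)
    then have g: "gain ch g \<or> loss ch g" "g \<in> V" "g \<noteq> r"
      unfolding change_edges_eq gain_edge_def loss_edge_def by auto
    have "\<not> anc par g (par g)"
      using g proper_anc_not_anc[OF g(2)] anc_par
      unfolding gain_edge_def loss_edge_def proper_anc_def by metis
    moreover have "w = g" if "gain ch w \<or> loss ch w" for w
      using 2 that unfolding change_edges_eq by blast
    ultimately have "l r ch = l (par g) ch"
      using par_in_V[OF g(2)] by (metis state_eq_if_no_change_between root_anc)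
    then have "gain ch g" using g root_state assms unfolding loss_edge_def by auto
    then show ?thesis using gained[of g] 2 not_gain_and_loss unfolding change_edges_eq by blast
  next
    case 3
    then obtain g h where "?Ch = {g, h}" "proper_anc par g h" "gain ch g" "loss ch h"
      using change_edges_shape assms by blast
    then show ?thesis
      using gained_lost[of g h] not_gain_and_loss unfolding change_edges_eq by blast
  qed
qed

lemma state_iff:
  assumes ch: "ch \<in> C" and y: "y \<in> V"
  shows "l y ch \<longleftrightarrow> (\<exists>g. gain ch g \<and> anc par g y) \<and> \<not> (\<exists>h. loss ch h \<and> anc par h y)"
proof -
  have root: "\<not> l r ch" using root_state ch by blast
  note const = state_eq_if_no_change_between[OF y]
  from ch show ?thesis
  proof (cases rule: character_cases)
    case unchanged
    then show ?thesis using const[OF root_anc[OF y]] root by blast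
  next
    case (gained g)
    show ?thesis
    proof (cases "anc par g y")
      case True
      then have "l g ch = l y ch" using gained by (intro const) (auto simp: proper_anc_def)
      then show ?thesis using gained True unfolding gain_edge_def by auto
    next
      case False
      then have "l r ch = l y ch" using gained by (intro const root_anc y) auto
      then show ?thesis using gained False root by auto
    qed
  next
    case (gained_lost g h)
    have "h \<in> V" using gained_lost loss_in_V by blast
    then have hg: "\<not> anc par h g" using proper_anc_not_anc gained_lost by blast
    consider "anc par h y" | "\<not> anc par h y" "anc par g y" | "\<not> anc par h y" "\<not> anc par g y"
      by blast
    then show ?thesis
    proof cases
      case 1
      then have "l h ch = l y ch" using gained_lost hg by (intro const) (auto simp: proper_anc_def)
      then show ?thesis using gained_lost 1 unfolding loss_edge_def by auto
    next
      case 2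
      then have "l g ch = l y ch" using gained_lost by (intro const) (auto simp: proper_anc_def)
      then show ?thesis using gained_lost 2 unfolding gain_edge_def by auto
    next
      case 3
      then have "l r ch = l y ch" using gained_lost by (intro const root_anc y) auto
      then show ?thesis using gained_lost 3 root by auto
    qed
  qed
qed

lemma gain_unique: "ch \<in> C \<Longrightarrow> gain ch x \<Longrightarrow> gain ch x' \<Longrightarrow> x = x'"
  by (cases rule: character_cases) auto

lemma loss_unique: "ch \<in> C \<Longrightarrow> loss ch x \<Longrightarrow> loss ch x' \<Longrightarrow> x = x'"
  by (cases rule: character_cases) auto

lemma gain_above_loss: "ch \<in> C \<Longrightarrow> loss ch h \<Longrightarrow> \<exists>g. gain ch g \<and> proper_anc par g h"
  by (cases rule: character_cases) auto

lemma state_iff_gain: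
  assumes "ch \<in> C" "gain ch g" "y \<in> V"
  shows "l y ch \<longleftrightarrow> anc par g y \<and> \<not> (\<exists>h. loss ch h \<and> anc par h y)"
  using state_iff[OF assms(1,3)] gain_unique[OF assms(1,2)] assms(2) by blast

end

lemma rb_matrix_no_active [simp]: "rb_matrix E {} s ch \<longleftrightarrow> (s, ch) \<in> E"
  unfolding rb_matrix_def by simp

lemma rb_connected_crossing:
  fixes E :: "('s \<times> 'c) set"
  assumes edges: "E \<subseteq> S \<times> C" and conn: "rb_connected S C E"
    and "i \<in> I" "I \<subseteq> S" "j \<in> S" "j \<notin> I"
  shows "\<exists>s1\<in>I. \<exists>s2\<in>S - I. \<exists>d. (s1, d) \<in> E \<and> (s2, d) \<in> E"
proof (rule ccontr)
  assume no_crossing: "\<not> ?thesis"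
  define R :: "('s + 'c) rel" where "R = {(Inl s, Inr c) | s c. (s, c) \<in> E}"
  define X where "X = Inl ` I \<union> Inr ` {d. \<exists>s\<in>I. (s, d) \<in> E}"
  have "(Inl i, Inl j) \<in> (R \<union> R\<inverse>)\<^sup>*"
    using conn assms(3-5) unfolding rb_connected_def R_def Let_def by auto
  moreover have "v \<in> X" if "(Inl i, v) \<in> (R \<union> R\<inverse>)\<^sup>*" for v
    using that
  proof (induction rule: rtrancl_induct)
    case base
    then show ?case using \<open>i \<in> I\<close> unfolding X_def by auto
  next
    case (step u v)
    then show ?case
      using no_crossing edges unfolding R_def X_def by auto
  qed
  ultimately show False using \<open>j \<notin> I\<close> unfolding X_def by auto
qed

definition interleaved_changes ::
  "'v set \<Rightarrow> 'v \<Rightarrow> ('v \<Rightarrow> 'v) \<Rightarrow> ('v \<Rightarrow> 'c \<Rightarrow> bool) \<Rightarrow> 'c \<Rightarrow> 'c \<Rightarrow> bool" where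
  "interleaved_changes V r par l c c' \<longleftrightarrow>
    (\<exists>x1 x2 x3. gain_edge V r par l c x1 \<and> gain_edge V r par l c' x2 \<and> loss_edge V r par l c x3
        \<and> proper_anc par x1 x2 \<and> proper_anc par x2 x3
        \<and> ((\<exists>x4. loss_edge V r par l c' x4 \<and> proper_anc par x3 x4)
            \<or> \<not> (\<exists>x4. loss_edge V r par l c' x4)))"

definition separated_losses ::
  "'s set \<Rightarrow> 'c set \<Rightarrow> ('s \<Rightarrow> 'c \<Rightarrow> bool) \<Rightarrow> 'v set \<Rightarrow> 'v \<Rightarrow> ('v \<Rightarrow> 'v) \<Rightarrow>
    ('v \<Rightarrow> 'c \<Rightarrow> bool) \<Rightarrow> 'c \<Rightarrow> 'c \<Rightarrow> bool" where
  "separated_losses S C M V r par l c c' \<longleftrightarrow>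
    (\<exists>y y'. loss_edge V r par l c y \<and> loss_edge V r par l c' y' \<and> \<not> anc par y y' \<and> \<not> anc par y' y)
    \<and> (conflicting S M c c' \<longrightarrow>
        (\<exists>z x x'. species_node S C M V l z \<and> gain_edge V r par l c x \<and> gain_edge V r par l c' x'
           \<and> proper_anc par z x \<and> proper_anc par z x'))"

lemma overlap_sym: "overlap S M c c' \<Longrightarrow> overlap S M c' c"
  unfolding overlap_def by blast

lemma conflicting_sym: "conflicting S M c c' \<Longrightarrow> conflicting S M c' c"
  unfolding conflicting_def by blast

lemma separated_losses_sym:
  "separated_losses S C M V r par l c' c \<Longrightarrow> separated_losses S C M V r par l c c'"
  unfolding separated_losses_def by (meson conflicting_sym)

locale maximal_solution = phylogeny V r par l C
  for V :: "'v set" and r and par and l :: "'v \<Rightarrow> 'c \<Rightarrow> bool" and C +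
  fixes S :: "'s set" and E :: "('s \<times> 'c) set"
  assumes edges: "E \<subseteq> S \<times> C"
    and connected: "rb_connected S C E"
    and maximal: "\<forall>x\<in>C. \<forall>y\<in>C. \<not> charS S (rb_matrix E {}) x \<subset> charS S (rb_matrix E {}) y"
    and realised: "\<forall>s\<in>S. \<exists>y\<in>V. \<forall>ch\<in>C. l y ch = rb_matrix E {} s ch"
begin

abbreviation "carriers ch \<equiv> charS S (rb_matrix E {}) ch"

abbreviation "realises s y \<equiv> y \<in> V \<and> (\<forall>ch\<in>C. l y ch \<longleftrightarrow> (s, ch) \<in> E)"

lemma mem_carriers: "s \<in> carriers ch \<longleftrightarrow> s \<in> S \<and> (s, ch) \<in> E"
  unfolding charS_def by simp

lemma realising_node: "s \<in> S \<Longrightarrow> \<exists>y. realises s y"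
  using realised by fastforce

lemma species_node_if_realises: "s \<in> S \<Longrightarrow> realises s y \<Longrightarrow> species_node S C (rb_matrix E {}) V l y"
  unfolding species_node_def by auto

context
  fixes g :: 'v and I :: "'s set" and c :: 'c
  assumes g_in_V: "g \<in> V" and I_subset: "I \<subseteq> S"
    and subtree_species: "\<And>s y. s \<in> S \<Longrightarrow> realises s y \<Longrightarrow> anc par g y \<longleftrightarrow> s \<in> I"
    and c_in_C: "c \<in> C" and carriers_c: "carriers c \<subset> I"
begin

lemma subtree_not_uniform:
  assumes ch: "ch \<in> C"
  shows "\<exists>y\<in>V. anc par g y \<and> \<not> l y ch"
proof (rule ccontr)
  assume uniform: "\<not> ?thesis"
  have "I \<subseteq> carriers ch"
  proof
    fix s assume s: "s \<in> I"
    then have "s \<in> S" using I_subset by blast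
    moreover obtain y where y: "realises s y" using realising_node[OF \<open>s \<in> S\<close>] by blast
    ultimately have "anc par g y" using subtree_species s by blast
    then have "l y ch" using uniform y by blast
    then show "s \<in> carriers ch" using y ch \<open>s \<in> S\<close> unfolding mem_carriers by blast
  qed
  then have "carriers c \<subset> carriers ch" using carriers_c by blast
  then show False using maximal c_in_C ch by blast
qed

lemma no_gain_beside_subtree:
  assumes ch: "ch \<in> C" "gain ch w" and beside: "\<not> anc par w g" "\<not> anc par g w"
    and d: "d \<in> C" "\<forall>y\<in>V. anc par w y \<longrightarrow> l y d" and s: "s \<in> I" "(s, d) \<in> E"
  shows False
proof -
  have "carriers ch \<subseteq> carriers d"
  proof
    fix t assume t: "t \<in> carriers ch"
    then obtain y where y: "realises t y" using realising_node mem_carriers by blast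
    then have "anc par w y" using state_iff_gain[OF ch] t ch(1) unfolding mem_carriers by blast
    then show "t \<in> carriers d" using d y t unfolding mem_carriers by blast
  qed
  moreover have "s \<notin> carriers ch"
  proof
    assume "s \<in> carriers ch"
    then obtain x where x: "realises s x" "anc par w x"
      using realising_node state_iff_gain[OF ch] ch(1) unfolding mem_carriers by blast
    then have "anc par g x" using subtree_species s I_subset by blast
    then show False using anc_linear[OF x(2)] beside by blast
  qed
  moreover have "s \<in> carriers d" using s I_subset unfolding mem_carriers by blast
  ultimately show False using maximal ch(1) d(1) by blast
qed

lemma no_loss_beside_subtree:
  assumes ch: "ch \<in> C" "loss ch w" and beside: "\<not> anc par w g" "\<not> anc par g w"
    and x: "gain ch x" "anc par x g"
  shows False
proof -
  have "l y ch" if y: "y \<in> V" "anc par g y" for y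
  proof -
    have "\<not> anc par w' y" if "loss ch w'" for w'
      using loss_unique[OF ch(1) that ch(2)] anc_linear[of w y g] y(2) beside by blast
    then show ?thesis using state_iff_gain[OF ch(1) x(1) y(1)] anc_trans[OF x(2) y(2)] by blast
  qed
  then show False using subtree_not_uniform ch(1) by blast
qed

(* A change strictly between a and e would be a gain or a loss beside the subtree of g. *)
lemma state_constant_beside_subtree:
  assumes e: "e \<in> V" "anc par a e" "anc par a g"
    and beside: "\<And>w. proper_anc par a w \<Longrightarrow> anc par w e \<Longrightarrow> \<not> anc par w g \<and> \<not> anc par g w"
    and carries_d: "\<And>w. proper_anc par a w \<Longrightarrow> anc par w e \<Longrightarrow> \<forall>y\<in>V. anc par w y \<longrightarrow> l y d"
    and d: "d \<in> C" "s \<in> I" "(s, d) \<in> E" and ch: "ch \<in> C"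
  shows "l a ch = l e ch"
proof (rule state_eq_if_no_change_between[OF e(1,2)])
  have no_gain_between: False if "gain ch w" "proper_anc par a w" "anc par w e" for w
    using no_gain_beside_subtree[OF ch that(1)] beside[OF that(2,3)] d carries_d[OF that(2,3)]
    by blast
  fix w assume w: "gain ch w \<or> loss ch w" "proper_anc par a w" "anc par w e"
  show False
  proof (cases "gain ch w")
    case True
    then show False using no_gain_between w by blast
  next
    case False
    then obtain x where x: "gain ch x" "proper_anc par x w"
      using gain_above_loss ch w(1) by blast
    have x_e: "anc par x e" using x(2) w(3) anc_trans unfolding proper_anc_def by blast
    show False
    proof (cases "proper_anc par a x")
      case True
      then show False using no_gain_between x(1) x_e by blast
    next
      case not_below_a: False
      have "anc par x g"
        using anc_linear[OF x_e e(2)] not_below_a anc_trans[OF _ e(3)]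
        unfolding proper_anc_def by blast
      then show False
        using no_loss_beside_subtree[OF ch _ _ _ x(1)] beside[OF w(2,3)] w(1) False by blast
    qed
  qed
qed

lemma species_above_subtree:
  assumes "j \<in> S" "j \<notin> I"
  obtains z where "species_node S C (rb_matrix E {}) V l z" "proper_anc par z g"
proof -
  obtain i where "i \<in> I" using carriers_c by blast
  then obtain s1 s2 d where s1: "s1 \<in> I" "(s1, d) \<in> E" and s2: "s2 \<in> S" "s2 \<notin> I" "(s2, d) \<in> E"
    using rb_connected_crossing[OF edges connected _ I_subset assms] by blast
  have d: "d \<in> C" using edges s1(2) by blast
  obtain x1 where x1: "realises s1 x1" using realising_node s1(1) I_subset by blast
  obtain e where e: "realises s2 e" using realising_node s2(1) by blast
  have g_x1: "anc par g x1" using subtree_species[OF _ x1] s1(1) I_subset by blast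
  have not_g_e: "\<not> anc par g e" using subtree_species[OF s2(1) e] s2(2) by blast
  have d_x1: "l x1 d" and d_e: "l e d" using x1 e d s1(2) s2(3) by auto
  obtain k where k: "gain d k" "anc par k x1"
    using state_iff[OF d] x1 d_x1 by blast
  have k_e: "anc par k e" using state_iff_gain[OF d k(1)] e d_e by blast
  have k_g: "anc par k g" using anc_linear[OF k(2) g_x1] anc_trans[of g k e] k_e not_g_e by blast
  obtain hd where hd: "loss d hd" "anc par g hd"
  proof -
    obtain y where y: "y \<in> V" "anc par g y" "\<not> l y d" using subtree_not_uniform[OF d] by blast
    then obtain hd where hd: "loss d hd" "anc par hd y"
      using state_iff_gain[OF d k(1) y(1)] anc_trans[OF k_g y(2)] by blast
    have "\<not> anc par hd g"
      using anc_trans[OF _ g_x1] state_iff_gain[OF d k(1)] x1 d_x1 hd(1) by blast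
    then show ?thesis using that hd anc_linear[OF hd(2) y(2)] by blast
  qed
  obtain a where a: "anc par a e" "anc par a g"
    and lowest: "\<And>x. anc par x e \<Longrightarrow> anc par x g \<Longrightarrow> anc par x a"
    using anc_lowest_common[OF _ g_in_V] e by blast
  have aV: "a \<in> V" using anc_in_V[OF g_in_V a(2)] .
  have beside: "\<not> anc par w g \<and> \<not> anc par g w" if w: "proper_anc par a w" "anc par w e" for w
    using lowest[OF w(2)] anc_antisym[OF aV] w anc_trans[of g w e] not_g_e
    unfolding proper_anc_def by blast
  have carries_d: "\<forall>y\<in>V. anc par w y \<longrightarrow> l y d" if w: "proper_anc par a w" "anc par w e" for w
  proof (intro ballI impI)
    fix y assume y: "y \<in> V" "anc par w y"
    have "anc par k y"
      using lowest[OF k_e k_g] w(1) y(2) anc_trans unfolding proper_anc_def by blast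
    moreover have "\<not> anc par g y" using anc_linear[OF y(2)] beside[OF w] by blast
    then have "\<not> anc par h y" if "loss d h" for h
      using loss_unique[OF d that hd(1)] anc_trans[OF hd(2)] by blast
    ultimately show "l y d" using state_iff_gain[OF d k(1) y(1)] by blast
  qed
  have "l a ch = l e ch" if "ch \<in> C" for ch
    using state_constant_beside_subtree[OF _ a(1,2) beside carries_d d s1 that] e by blast
  then have "species_node S C (rb_matrix E {}) V l a"
    using species_node_if_realises[OF s2(1)] e aV by auto
  moreover have "proper_anc par a g"
    using a not_g_e unfolding proper_anc_def by blast
  ultimately show ?thesis using that by blast
qed

end

lemma conflict_species_above:
  assumes c: "c \<in> C" "gain c g" "loss c h" and c': "c' \<in> C" "gain c' g'" "loss c' h'"
    and g_g': "anc par g g'" and g'_h: "anc par g' h"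
    and apart: "\<not> anc par h h'" "\<not> anc par h' h"
    and conflict: "conflicting S (rb_matrix E {}) c c'"
  shows "\<exists>z. species_node S C (rb_matrix E {}) V l z \<and> proper_anc par z g \<and> proper_anc par z g'"
proof -
  define I where "I = carriers c \<union> carriers c'"
  have I_subset: "I \<subseteq> S" unfolding I_def charS_def by blast
  obtain u where u: "u \<in> S" "(u, c) \<notin> E" "(u, c') \<in> E"
    using conflict[unfolded conflicting_def, rule_format, of False True] by auto
  obtain j where j: "j \<in> S" "(j, c) \<notin> E" "(j, c') \<notin> E"
    using conflict[unfolded conflicting_def, rule_format, of False False] by auto
  have "u \<in> carriers c'" "u \<notin> carriers c" "j \<notin> carriers c" "j \<notin> carriers c'"
    using u j unfolding mem_carriers by auto
  then have "carriers c \<subset> I" "j \<notin> I" unfolding I_def by blast+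
  moreover have "anc par g y \<longleftrightarrow> s \<in> I" if s: "s \<in> S" "realises s y" for s y
  proof -
    have y: "y \<in> V" and "l y c \<longleftrightarrow> (s, c) \<in> E" "l y c' \<longleftrightarrow> (s, c') \<in> E"
      using s(2) c(1) c'(1) by simp_all
    then have state: "s \<in> I \<longleftrightarrow> l y c \<or> l y c'"
      using s(1) unfolding I_def by (simp add: mem_carriers)
    have "l y c \<or> l y c'" if g_y: "anc par g y"
    proof (rule ccontr)
      assume lacks: "\<not> (l y c \<or> l y c')"
      then have h_y: "anc par h y"
        using state_iff_gain[OF c(1,2) y] loss_unique[OF c(1) _ c(3)] g_y by blast
      then have "anc par h' y"
        using state_iff_gain[OF c'(1,2) y] loss_unique[OF c'(1) _ c'(3)] lacks
          anc_trans[OF g'_h h_y] by blast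
      then show False using anc_linear[OF h_y] apart by blast
    qed
    moreover have "anc par g y" if "l y c \<or> l y c'"
      using that state_iff_gain[OF c(1,2) y] state_iff_gain[OF c'(1,2) y] anc_trans[OF g_g'] by blast
    ultimately show ?thesis using state by blast
  qed
  ultimately obtain z where z: "species_node S C (rb_matrix E {}) V l z" "proper_anc par z g"
    using species_above_subtree[OF gain_in_V[OF c(2)] I_subset _ c(1)] j(1) by blast
  have "z \<noteq> g'"
    using z(2) g_g' anc_antisym[OF gain_in_V[OF c'(2)]] unfolding proper_anc_def by blast
  then have "proper_anc par z g'" using z(2) anc_trans[OF _ g_g'] unfolding proper_anc_def by blast
  then show ?thesis using z by blast
qed

lemma overlap_ordered_gains:
  assumes c: "c \<in> C" "gain c g" and c': "c' \<in> C" "gain c' g'" and g_g': "anc par g g'"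
    and ovl: "overlap S (rb_matrix E {}) c c'"
  shows "interleaved_changes V r par l c c' \<or> separated_losses S C (rb_matrix E {}) V r par l c c'"
proof -
  obtain w u v where "w \<in> carriers c" "w \<in> carriers c'" "u \<in> carriers c'" "u \<notin> carriers c"
    "v \<in> carriers c" "v \<notin> carriers c'"
    using ovl unfolding overlap_def by blast
  then obtain xw xu xv where xw: "xw \<in> V" "l xw c" "l xw c'" and xu: "xu \<in> V" "l xu c'" "\<not> l xu c"
    and xv: "xv \<in> V" "l xv c" "\<not> l xv c'"
    using realising_node c(1) c'(1) unfolding mem_carriers by metis
  note state_c = state_iff_gain[OF c] and state_c' = state_iff_gain[OF c']
  have "anc par g xu" using state_c'[OF xu(1)] xu(2) anc_trans[OF g_g'] by blast
  then obtain h where h: "loss c h" "anc par h xu" using state_c[OF xu(1)] xu(3) by blast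
  have "\<not> anc par h g'"
    using state_c[OF xw(1)] state_c'[OF xw(1)] xw(2,3) h(1) anc_trans by blast
  then have g'_h: "proper_anc par g' h"
    using anc_linear[OF h(2)] state_c'[OF xu(1)] xu(2) unfolding proper_anc_def by blast
  have lost_below_xv: "\<exists>h'. loss c' h' \<and> anc par h' xv" if "g = g'"
    using state_c[OF xv(1)] state_c'[OF xv(1)] xv(2,3) that by blast
  have interleaved: "interleaved_changes V r par l c c'"
    if "g \<noteq> g'" "(\<exists>h'. loss c' h' \<and> proper_anc par h h') \<or> \<not> (\<exists>h'. loss c' h')"
    using that c(2) c'(2) h(1) g_g' g'_h unfolding interleaved_changes_def proper_anc_def by blast
  show ?thesis
  proof (cases "\<exists>h'. loss c' h'")
    case False
    then show ?thesis using lost_below_xv interleaved by blast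
  next
    case True
    then obtain h' where h': "loss c' h'" by blast
    show ?thesis
    proof (cases "g \<noteq> g' \<and> proper_anc par h h'")
      case True
      then show ?thesis using interleaved h' by blast
    next
      case False
      have h'_h: "\<not> anc par h' h"
        using anc_trans[OF _ h(2)] state_c'[OF xu(1)] xu(2) h' by blast
      have h_h': "\<not> anc par h h'"
      proof
        assume "anc par h h'"
        then have "g = g'" using False h'_h unfolding proper_anc_def by blast
        then show False
          using lost_below_xv loss_unique[OF c'(1) _ h'] \<open>anc par h h'\<close> anc_trans
            state_c[OF xv(1)] xv(2) h(1) by blast
      qed
      have "conflicting S (rb_matrix E {}) c c' \<Longrightarrow>
          \<exists>z. species_node S C (rb_matrix E {}) V l z \<and> proper_anc par z g \<and> proper_anc par z g'"
        using conflict_species_above[OF c h(1) c' h' g_g'] g'_h h_h' h'_h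
        unfolding proper_anc_def by blast
      then have "separated_losses S C (rb_matrix E {}) V r par l c c'"
        using h(1) h' h_h' h'_h c(2) c'(2) unfolding separated_losses_def by blast
      then show ?thesis by blast
    qed
  qed
qed

lemma overlap_cases:
  assumes c: "c \<in> C" "gain c g" and c': "c' \<in> C" "gain c' g'"
    and ovl: "overlap S (rb_matrix E {}) c c'"
  shows "interleaved_changes V r par l c c' \<or> interleaved_changes V r par l c' c
    \<or> separated_losses S C (rb_matrix E {}) V r par l c c'"
proof -
  obtain w where "w \<in> carriers c" "w \<in> carriers c'" using ovl unfolding overlap_def by blast
  then obtain x where x: "x \<in> V" "l x c" "l x c'"
    using realising_node c(1) c'(1) unfolding mem_carriers by metis
  then have "anc par g x" "anc par g' x" using state_iff_gain[OF c] state_iff_gain[OF c'] by blast+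
  then consider "anc par g g'" | "anc par g' g" using anc_linear by blast
  then show ?thesis
  proof cases
    case 1
    then show ?thesis using overlap_ordered_gains[OF c c' _ ovl] by blast
  next
    case 2
    then show ?thesis
      using overlap_ordered_gains[OF c' c _ overlap_sym[OF ovl]]
        separated_losses_sym[of S C "rb_matrix E {}" V r par l c' c] by blast
  qed
qed

end

lemma maximal_solution_if_maximal_reducible:
  assumes GM: "maximal_reducible S C E Act" and TM: "rb_solves S C E Act V r par l"
  shows "maximal_solution V r par l C S E"
proof -
  have Act: "Act = {}" using GM unfolding maximal_reducible_def by simp
  then have "persistent_phylogeny S C (rb_matrix E {}) {} V r par l"
    using TM unfolding rb_solves_def by simp
  moreover have "E \<subseteq> S \<times> C" "rb_connected S C E"
    "\<forall>x\<in>C. \<forall>y\<in>C. \<not> charS S (rb_matrix E {}) x \<subset> charS S (rb_matrix E {}) y"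
    using GM Act unfolding maximal_reducible_def rb_graph_def reducible_def maximal_char_def
    by auto
  ultimately show ?thesis
    unfolding maximal_solution_def maximal_solution_axioms_def phylogeny_def phylogeny_axioms_def
      rooted_def persistent_phylogeny_def by auto
qed

theorem lemma4:
  fixes S :: "'s set" and C :: "'c set" and E :: "('s \<times> 'c) set" and Act :: "'c set"
    and V :: "'v set" and r :: 'v and par :: "'v \<Rightarrow> 'v" and l :: "'v \<Rightarrow> 'c \<Rightarrow> bool"
    and c c' :: 'c
  assumes GM: "maximal_reducible S C E Act"
    and TM: "rb_solves S C E Act V r par l"
    and cC: "c \<in> C" and c'C: "c' \<in> C"
    and inact: "c \<notin> Act" "c' \<notin> Act"
    and occ_c: "\<exists>x. gain_edge V r par l c x"
    and occ_c': "\<exists>x. gain_edge V r par l c' x"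
    and ovl: "overlap S (rb_matrix E Act) c c'"
  shows
    "(\<exists>x1 x2 x3. gain_edge V r par l c x1 \<and> gain_edge V r par l c' x2 \<and> loss_edge V r par l c x3
        \<and> proper_anc par x1 x2 \<and> proper_anc par x2 x3
        \<and> ((\<exists>x4. loss_edge V r par l c' x4 \<and> proper_anc par x3 x4)
            \<or> \<not> (\<exists>x4. loss_edge V r par l c' x4)))
   \<or> (\<exists>x1 x2 x3. gain_edge V r par l c' x1 \<and> gain_edge V r par l c x2 \<and> loss_edge V r par l c' x3
        \<and> proper_anc par x1 x2 \<and> proper_anc par x2 x3
        \<and> ((\<exists>x4. loss_edge V r par l c x4 \<and> proper_anc par x3 x4)
            \<or> \<not> (\<exists>x4. loss_edge V r par l c x4)))
   \<or> ((\<exists>y y'. loss_edge V r par l c y \<and> loss_edge V r par l c' y'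
          \<and> \<not> anc par y y' \<and> \<not> anc par y' y)
      \<and> (conflicting S (rb_matrix E Act) c c' \<longrightarrow>
          (\<exists>z x x'. species_node S C (rb_matrix E Act) V l z
             \<and> gain_edge V r par l c x \<and> gain_edge V r par l c' x'
             \<and> proper_anc par z x \<and> proper_anc par z x')))"
proof -
  have Act: "Act = {}" using GM unfolding maximal_reducible_def by simp
  interpret maximal_solution V r par l C S E
    using maximal_solution_if_maximal_reducible[OF GM TM] .
  obtain g g' where "gain c g" "gain c' g'" using occ_c occ_c' by blast
  then have "interleaved_changes V r par l c c' \<or> interleaved_changes V r par l c' c
      \<or> separated_losses S C (rb_matrix E {}) V r par l c c'"
    using overlap_cases[OF cC _ c'C] ovl Act by blast
  then show ?thesis unfolding interleaved_changes_def separated_losses_def Act .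
qed

end
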